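(* Let $Q$ be a loop, $S\le Q$, and $g\in\mathrm{Mlt}_\lambda(Q)$. For each $x\in g(S)$ there exists $h_x\in\mathrm{Inn}_\lambda(Q)$ such that $g(S)=x\,h_x(S)$. In particular, if $1\in g(S)$, then there exists $h\in\mathrm{Inn}_\lambda(Q)$ such that $g(S)=h(S)$.
   Context: For $x\in Q$, $L_x:Q\to Q$, $y\mapsto xy$, is the left translation. $\mathrm{Mlt}_\lambda(Q)=\langle L_x : x\in Q\rangle$ is the left multiplication group, and $\mathrm{Inn}_\lambda(Q)$ is its subgroup stabilizing the identity $1$. For a set $A$, $xA=\{xa:a\in A\}$. *)

theory Defs
  imports Main
begin

definition loop :: "'a set \<Rightarrow> ('a \<Rightarrow> 'a \<Rightarrow> 'a) \<Rightarrow> 'a \<Rightarrow> bool" where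
  "loop Q m e \<longleftrightarrow> e \<in> Q \<and> (\<forall>x\<in>Q. \<forall>y\<in>Q. m x y \<in> Q)
     \<and> (\<forall>x\<in>Q. m e x = x \<and> m x e = x)
     \<and> (\<forall>a\<in>Q. \<forall>b\<in>Q. (\<exists>!x. x \<in> Q \<and> m a x = b) \<and> (\<exists>!y. y \<in> Q \<and> m y a = b))"

definition ldiv :: "'a set \<Rightarrow> ('a \<Rightarrow> 'a \<Rightarrow> 'a) \<Rightarrow> 'a \<Rightarrow> 'a \<Rightarrow> 'a" where
  "ldiv Q m x y = (THE z. z \<in> Q \<and> m x z = y)"

definition rdiv :: "'a set \<Rightarrow> ('a \<Rightarrow> 'a \<Rightarrow> 'a) \<Rightarrow> 'a \<Rightarrow> 'a \<Rightarrow> 'a" where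
  "rdiv Q m y x = (THE z. z \<in> Q \<and> m z x = y)"

definition subloop :: "'a set \<Rightarrow> 'a set \<Rightarrow> ('a \<Rightarrow> 'a \<Rightarrow> 'a) \<Rightarrow> 'a \<Rightarrow> bool" where
  "subloop S Q m e \<longleftrightarrow> S \<subseteq> Q \<and> e \<in> S
     \<and> (\<forall>x\<in>S. \<forall>y\<in>S. m x y \<in> S \<and> ldiv Q m x y \<in> S \<and> rdiv Q m y x \<in> S)"

text \<open>Elements are represented as
  functions; only their values on Q are relevant.\<close>
inductive_set mlt_l :: "'a set \<Rightarrow> ('a \<Rightarrow> 'a \<Rightarrow> 'a) \<Rightarrow> ('a \<Rightarrow> 'a) set"
  for Q m where
  mlt_id: "(\<lambda>y. y) \<in> mlt_l Q m"
| mlt_L: "g \<in> mlt_l Q m \<Longrightarrow> x \<in> Q \<Longrightarrow> (\<lambda>y. m x (g y)) \<in> mlt_l Q m"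
| mlt_Linv: "g \<in> mlt_l Q m \<Longrightarrow> x \<in> Q \<Longrightarrow> (\<lambda>y. ldiv Q m x (g y)) \<in> mlt_l Q m"

definition inn_l :: "'a set \<Rightarrow> ('a \<Rightarrow> 'a \<Rightarrow> 'a) \<Rightarrow> 'a \<Rightarrow> ('a \<Rightarrow> 'a) set" where
  "inn_l Q m e = {h \<in> mlt_l Q m. h e = e}"

end

theory Submission
  imports Defs
begin

text \<open>If x = g s0 with s0 in S, then h = L_x^-1 g L_s0 lies in the left multiplication
  group and fixes 1; since L_s0 permutes S, we get h(S) = x\g(S), i.e. g(S) = x h(S).
  For x = 1 the left translation is the identity.\<close>

lemma loop_closed: "loop Q m e \<Longrightarrow> x \<in> Q \<Longrightarrow> y \<in> Q \<Longrightarrow> m x y \<in> Q"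
  unfolding loop_def by (elim conjE) simp

lemma loop_one_in: "loop Q m e \<Longrightarrow> e \<in> Q"
  unfolding loop_def by (elim conjE) simp

lemma loop_left_one: "loop Q m e \<Longrightarrow> x \<in> Q \<Longrightarrow> m e x = x"
  unfolding loop_def by (elim conjE) simp

lemma loop_right_one: "loop Q m e \<Longrightarrow> x \<in> Q \<Longrightarrow> m x e = x"
  unfolding loop_def by (elim conjE) simp

lemma loop_ex1_left_solution:
  "loop Q m e \<Longrightarrow> x \<in> Q \<Longrightarrow> y \<in> Q \<Longrightarrow> \<exists>!z. z \<in> Q \<and> m x z = y"
  unfolding loop_def by (elim conjE) simp

lemma
  assumes "loop Q m e" "x \<in> Q" "y \<in> Q"
  shows ldiv_closed: "ldiv Q m x y \<in> Q"
    and mul_ldiv: "m x (ldiv Q m x y) = y"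
  using theI'[OF loop_ex1_left_solution[OF assms]] unfolding ldiv_def by simp_all

lemma ldiv_mul:
  assumes "loop Q m e" "x \<in> Q" "z \<in> Q"
  shows "ldiv Q m x (m x z) = z"
  unfolding ldiv_def
  by (rule the1_equality[OF loop_ex1_left_solution[OF assms(1,2) loop_closed[OF assms]]])
    (simp add: assms(3))

lemma ldiv_self: "loop Q m e \<Longrightarrow> x \<in> Q \<Longrightarrow> ldiv Q m x x = e"
  using ldiv_mul[of Q m e x e] by (simp add: loop_one_in loop_right_one)

lemma ldiv_one: "loop Q m e \<Longrightarrow> y \<in> Q \<Longrightarrow> ldiv Q m e y = y"
  using ldiv_mul[of Q m e e y] by (simp add: loop_one_in loop_left_one)

lemma mul_ldiv_image:
  assumes "loop Q m e" "x \<in> Q" "A \<subseteq> Q"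
  shows "(\<lambda>y. m x y) ` (\<lambda>y. ldiv Q m x y) ` A = A"
  unfolding image_image using assms mul_ldiv[OF assms(1,2)] by (simp add: subset_iff)

lemma subloop_subset: "subloop S Q m e \<Longrightarrow> S \<subseteq> Q"
  unfolding subloop_def by (elim conjE) simp

lemma subloop_closed: "subloop S Q m e \<Longrightarrow> x \<in> S \<Longrightarrow> y \<in> S \<Longrightarrow> m x y \<in> S"
  unfolding subloop_def by (elim conjE) simp

lemma subloop_ldiv_closed: "subloop S Q m e \<Longrightarrow> x \<in> S \<Longrightarrow> y \<in> S \<Longrightarrow> ldiv Q m x y \<in> S"
  unfolding subloop_def by (elim conjE) simp

lemma subloop_left_translation_image:
  assumes L: "loop Q m e" and S: "subloop S Q m e" and s: "s \<in> S"
  shows "(\<lambda>y. m s y) ` S = S"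
proof
  show "(\<lambda>y. m s y) ` S \<subseteq> S"
    using subloop_closed[OF S s] by blast
  have "m s (ldiv Q m s t) = t" if "t \<in> S" for t
    using mul_ldiv[OF L] subloop_subset[OF S] s that by blast
  then show "S \<subseteq> (\<lambda>y. m s y) ` S"
    using subloop_ldiv_closed[OF S s] by (metis image_eqI subsetI)
qed

lemma mlt_l_closed:
  assumes "loop Q m e" "g \<in> mlt_l Q m" "y \<in> Q"
  shows "g y \<in> Q"
  using assms(2,3)
proof (induction g arbitrary: y)
  case mlt_id
  then show ?case by simp
next
  case (mlt_L g x)
  then show ?case using loop_closed[OF assms(1)] by blast
next
  case (mlt_Linv g x)
  then show ?case using ldiv_closed[OF assms(1)] by blast
qed

lemma mlt_l_comp:
  assumes "g \<in> mlt_l Q m" "f \<in> mlt_l Q m"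
  shows "(\<lambda>y. g (f y)) \<in> mlt_l Q m"
  using assms(1)
proof (induction g)
  case mlt_id
  then show ?case using assms(2) by simp
next
  case (mlt_L g x)
  then show ?case using mlt_l.mlt_L by fastforce
next
  case (mlt_Linv g x)
  then show ?case using mlt_l.mlt_Linv by fastforce
qed

lemma mlt_l_left_translation: "x \<in> Q \<Longrightarrow> (\<lambda>y. m x y) \<in> mlt_l Q m"
  by (drule mlt_l.mlt_L[OF mlt_l.mlt_id]) simp

lemma inn_l_ldiv_image:
  assumes L: "loop Q m e" and S: "subloop S Q m e" and g: "g \<in> mlt_l Q m"
    and x: "x \<in> g ` S"
  shows "\<exists>h \<in> inn_l Q m e. h ` S = (\<lambda>y. ldiv Q m x y) ` g ` S"
proof -
  obtain s0 where s0: "s0 \<in> S" and x_eq: "x = g s0"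
    using x by blast
  have s0Q: "s0 \<in> Q" and xQ: "x \<in> Q"
    using s0 subloop_subset[OF S] mlt_l_closed[OF L g] x_eq by auto
  define h where "h = (\<lambda>y. ldiv Q m x (g (m s0 y)))"
  have "h \<in> mlt_l Q m"
    unfolding h_def
    by (intro mlt_l.mlt_Linv mlt_l_comp[OF g] mlt_l_left_translation s0Q xQ)
  moreover have "h e = e"
    unfolding h_def using L s0Q xQ x_eq by (simp add: loop_right_one ldiv_self)
  moreover have "h ` S = (\<lambda>y. ldiv Q m x y) ` g ` (\<lambda>y. m s0 y) ` S"
    unfolding h_def image_image ..
  ultimately show ?thesis
    unfolding inn_l_def subloop_left_translation_image[OF L S s0] by blast
qed

theorem lemma6p4:
  fixes Q S :: "'a set" and m :: "'a \<Rightarrow> 'a \<Rightarrow> 'a" and e :: 'a and g :: "'a \<Rightarrow> 'a"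
  assumes "loop Q m e" and "subloop S Q m e" and "g \<in> mlt_l Q m"
  shows "(\<forall>x \<in> g ` S. \<exists>h \<in> inn_l Q m e. g ` S = (\<lambda>s. m x s) ` (h ` S))
    \<and> (e \<in> g ` S \<longrightarrow> (\<exists>h \<in> inn_l Q m e. g ` S = h ` S))"
proof -
  have gS: "g ` S \<subseteq> Q"
    using mlt_l_closed[OF assms(1,3)] subloop_subset[OF assms(2)] by blast
  have coset: "\<exists>h \<in> inn_l Q m e. g ` S = (\<lambda>s. m x s) ` (h ` S)" if x: "x \<in> g ` S" for x
  proof -
    obtain h where h: "h \<in> inn_l Q m e" and hS: "h ` S = (\<lambda>y. ldiv Q m x y) ` g ` S"
      using inn_l_ldiv_image[OF assms x] by blast
    have "g ` S = (\<lambda>s. m x s) ` (h ` S)"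
      unfolding hS using x gS by (intro mul_ldiv_image[OF assms(1), symmetric]) auto
    with h show ?thesis by blast
  qed
  have "(\<lambda>y. ldiv Q m e y) ` g ` S = g ` S"
    using gS ldiv_one[OF assms(1)] by force
  then have "\<exists>h \<in> inn_l Q m e. g ` S = h ` S" if "e \<in> g ` S"
    using inn_l_ldiv_image[OF assms that] by (metis (no_types))
  with coset show ?thesis
    by blast
qed

end
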